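(* Let $d \ge 2$. As $\{r^{(1)}, r^{(2)}\}$ ranges over all pairs of incomparable points of $(0,1)^d$ whose $2d$ coordinates are all distinct, the set of possible values of the number $\gamma$ of generators of their record-setting region is exactly $\{ d + a(d-a) : 1 \le a \le \lfloor d/2 \rfloor\}$.
   Context: For $x,y \in \mathbb{R}^d$, $x \prec y$ means $x_j < y_j$ for all $j$, and $x \le y$ means $x_j \le y_j$ for all $j$; points are incomparable if neither is $\le$ the other. The record-setting region of points $r^{(1)},\dots,r^{(\rho)}$ is $S := \{x \in [0,1)^d : x \not\prec r^{(i)} \text{ for all } i \in [\rho]\}$, and its generators are the minimal elements of $S$ with respect to $\le$. *)

theory Defs
  imports "HOL-Analysis.Analysis"
begin

text \<open>Points of R^d are vectors real^'n with d = CARD('n).\<close>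

definition vprec :: "real^'n \<Rightarrow> real^'n \<Rightarrow> bool" where
  "vprec x y \<longleftrightarrow> (\<forall>j. x$j < y$j)"

definition vle :: "real^'n \<Rightarrow> real^'n \<Rightarrow> bool" where
  "vle x y \<longleftrightarrow> (\<forall>j. x$j \<le> y$j)"

definition incomparable :: "real^'n \<Rightarrow> real^'n \<Rightarrow> bool" where
  "incomparable x y \<longleftrightarrow> \<not> vle x y \<and> \<not> vle y x"

definition record_region :: "(real^'n) set \<Rightarrow> (real^'n) set" where
  "record_region R = {x. (\<forall>j. 0 \<le> x$j \<and> x$j < 1) \<and> (\<forall>r\<in>R. \<not> vprec x r)}"

definition generators :: "(real^'n) set \<Rightarrow> (real^'n) set" where
  "generators S = {x\<in>S. \<forall>y\<in>S. vle y x \<longrightarrow> y = x}"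

end

theory Submission
  imports Defs
begin

text \<open>For two points with positive coordinates, x lies in the record-setting region iff it
  dominates r1 in some coordinate and r2 in some coordinate. A minimal such x is therefore
  supported on the one or two witnessing coordinates: either the axis point
  axis i (max r1_i r2_i), or axis i r1_i + axis j r2_j with i \<noteq> j, and the latter is minimal
  exactly when r1_i < r2_i and r2_j < r1_j. With a = #{i. r1_i < r2_i} this gives
  d axis generators and a (d - a) pair generators; incomparability means 1 \<le> a \<le> d - 1,
  the count is symmetric under a \<mapsto> d - a, and every such a is realised by coordinates of
  the form p_k and p_k + 1/2 with distinct p_k \<in> (0, 1/2).\<close>

lemma mem_record_region_pair_iff:
  "x \<in> record_region {r1, r2} \<longleftrightarrow>
     (\<forall>j. 0 \<le> x$j \<and> x$j < 1) \<and> (\<exists>i. r1$i \<le> x$i) \<and> (\<exists>j. r2$j \<le> x$j)"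
  unfolding record_region_def vprec_def by (auto simp: not_less)

lemma record_region_vle_zero:
  assumes "y \<in> record_region R" "vle y z" "z$k = 0"
  shows "y$k = 0"
proof -
  have "0 \<le> y$k" using assms(1) unfolding record_region_def by blast
  moreover have "y$k \<le> z$k" using assms(2) unfolding vle_def by blast
  ultimately show ?thesis using assms(3) by simp
qed

lemma mem_generatorsI:
  "x \<in> S \<Longrightarrow> (\<And>y. y \<in> S \<Longrightarrow> vle y x \<Longrightarrow> y = x) \<Longrightarrow> x \<in> generators S"
  unfolding generators_def by blast

lemma mem_generatorsD:
  "x \<in> generators S \<Longrightarrow> y \<in> S \<Longrightarrow> vle y x \<Longrightarrow> y = x"
  unfolding generators_def by blast

lemma incomparable_iff_ex_less:
  "incomparable x y \<longleftrightarrow> (\<exists>i. x$i < y$i) \<and> (\<exists>j. y$j < x$j)"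
  unfolding incomparable_def vle_def by (auto simp: not_le)

context
  fixes r1 r2 :: "real^'n"
  assumes unit_cube: "\<forall>j. 0 < r1$j \<and> r1$j < 1 \<and> 0 < r2$j \<and> r2$j < 1"
begin

private lemma r1_pos: "0 < r1$j" and r2_pos: "0 < r2$j"
  using unit_cube by auto

lemma axis_mem_record_region_pair:
  assumes "r1$i \<le> u" "r2$i \<le> u" "u < 1"
  shows "axis i u \<in> record_region {r1, r2}"
proof -
  have "0 \<le> u" using assms r1_pos[of i] by linarith
  then have "\<forall>k. 0 \<le> axis i u $ k \<and> axis i u $ k < 1"
    using assms by (simp add: axis_def)
  moreover have "r1$i \<le> axis i u $ i" "r2$i \<le> axis i u $ i"
    using assms by simp_all
  ultimately show ?thesis
    unfolding mem_record_region_pair_iff by blast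
qed

lemma axis_add_axis_mem_record_region_pair:
  assumes "i \<noteq> j" "r1$i \<le> u" "u < 1" "r2$j \<le> v" "v < 1"
  shows "axis i u + axis j v \<in> record_region {r1, r2}"
proof -
  let ?x = "axis i u + axis j v"
  have "0 \<le> u" "0 \<le> v" using assms r1_pos[of i] r2_pos[of j] by linarith+
  then have "\<forall>k. 0 \<le> ?x$k \<and> ?x$k < 1"
    using assms by (simp add: axis_def)
  moreover have "r1$i \<le> ?x$i" "r2$j \<le> ?x$j"
    using assms by (simp_all add: axis_def)
  ultimately show ?thesis
    unfolding mem_record_region_pair_iff by blast
qed

lemma axis_max_mem_generators:
  "axis i (max (r1$i) (r2$i)) \<in> generators (record_region {r1, r2})"
proof -
  let ?S = "record_region {r1, r2}" and ?z = "axis i (max (r1$i) (r2$i))"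
  have "?z \<in> ?S"
    using unit_cube by (intro axis_mem_record_region_pair) auto
  moreover have "y = ?z" if y: "y \<in> ?S" "vle y ?z" for y
  proof -
    have zero: "y$k = 0" if "k \<noteq> i" for k
      using record_region_vle_zero[OF y] that by (simp add: axis_def)
    obtain k l where k: "r1$k \<le> y$k" and l: "r2$l \<le> y$l"
      using y(1) unfolding mem_record_region_pair_iff by blast
    have "k = i" by (rule ccontr) (use zero[of k] k r1_pos[of k] in simp)
    moreover have "l = i" by (rule ccontr) (use zero[of l] l r2_pos[of l] in simp)
    ultimately have "max (r1$i) (r2$i) \<le> y$i"
      using k l by simp
    moreover have "y$i \<le> ?z$i"
      using y(2) unfolding vle_def by blast
    ultimately have "y$i = ?z$i"
      by (auto intro: order_antisym)
    then show ?thesis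
      using zero by (auto simp: vec_eq_iff axis_def)
  qed
  ultimately show ?thesis
    by (rule mem_generatorsI)
qed

lemma axis_add_axis_mem_generators:
  assumes i: "r1$i < r2$i" and j: "r2$j < r1$j"
  shows "axis i (r1$i) + axis j (r2$j) \<in> generators (record_region {r1, r2})"
proof -
  let ?S = "record_region {r1, r2}" and ?z = "axis i (r1$i) + axis j (r2$j)"
  have ij: "i \<noteq> j" using i j by auto
  have "?z \<in> ?S"
    using unit_cube ij by (intro axis_add_axis_mem_record_region_pair) auto
  moreover have "y = ?z" if y: "y \<in> ?S" "vle y ?z" for y
  proof -
    have zero: "y$k = 0" if "k \<noteq> i" "k \<noteq> j" for k
      using record_region_vle_zero[OF y] that by (simp add: axis_def)
    have "y$i \<le> ?z$i" "y$j \<le> ?z$j"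
      using y(2) unfolding vle_def by blast+
    then have below: "y$i \<le> r1$i" "y$j \<le> r2$j"
      using ij by (simp_all add: axis_def)
    obtain k l where k: "r1$k \<le> y$k" and l: "r2$l \<le> y$l"
      using y(1) unfolding mem_record_region_pair_iff by blast
    have "k = i \<or> k = j" by (rule ccontr) (use zero[of k] k r1_pos[of k] in simp)
    then have "y$i = r1$i"
      using k below j by auto
    have "l = i \<or> l = j" by (rule ccontr) (use zero[of l] l r2_pos[of l] in simp)
    then have "y$j = r2$j"
      using l below i by auto
    show ?thesis
    proof (rule vec_eq_iff[THEN iffD2], intro allI)
      fix k
      show "y$k = ?z$k"
        using zero[of k] \<open>y$i = r1$i\<close> \<open>y$j = r2$j\<close> ij
        by (cases "k = i"; cases "k = j") (simp_all add: axis_def)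
    qed
  qed
  ultimately show ?thesis
    by (rule mem_generatorsI)
qed

lemma generators_record_region_pair_cases:
  assumes x: "x \<in> generators (record_region {r1, r2})"
  obtains i where "x = axis i (max (r1$i) (r2$i))"
  | i j where "i \<noteq> j" "x = axis i (r1$i) + axis j (r2$j)"
proof -
  let ?S = "record_region {r1, r2}"
  have "x \<in> ?S" using x unfolding generators_def by blast
  then obtain i j where box: "\<forall>k. 0 \<le> x$k \<and> x$k < 1"
    and i: "r1$i \<le> x$i" and j: "r2$j \<le> x$j"
    unfolding mem_record_region_pair_iff by blast
  show thesis
  proof (cases "i = j")
    case True
    have "vle (axis i (max (r1$i) (r2$i))) x"
      using box i j True unfolding vle_def axis_def by auto
    moreover have "axis i (max (r1$i) (r2$i)) \<in> ?S"
      using unit_cube by (intro axis_mem_record_region_pair) auto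
    ultimately show thesis
      using mem_generatorsD[OF x] that(1) by metis
  next
    case False
    have "vle (axis i (r1$i) + axis j (r2$j)) x"
      using box i j False unfolding vle_def axis_def by auto
    moreover have "axis i (r1$i) + axis j (r2$j) \<in> ?S"
      using unit_cube False by (intro axis_add_axis_mem_record_region_pair) auto
    ultimately show thesis
      using mem_generatorsD[OF x] that(2)[OF False] by metis
  qed
qed

text \<open>Otherwise a single axis point below the pair point would lie in the region.\<close>
lemma axis_add_axis_mem_generators_imp_less:
  assumes ij: "i \<noteq> j"
    and z: "axis i (r1$i) + axis j (r2$j) \<in> generators (record_region {r1, r2})"
  shows "r1$i < r2$i" "r2$j < r1$j"
proof -
  let ?z = "axis i (r1$i) + axis j (r2$j)"
  show "r1$i < r2$i"
  proof (rule ccontr)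
    assume "\<not> r1$i < r2$i"
    then have "axis i (r1$i) \<in> record_region {r1, r2}"
      using unit_cube by (auto intro: axis_mem_record_region_pair)
    moreover have "vle (axis i (r1$i)) ?z"
      using r2_pos[of j] unfolding vle_def axis_def by auto
    ultimately have "axis i (r1$i) = ?z"
      by (rule mem_generatorsD[OF z])
    then have "axis i (r1$i) $ j = ?z $ j"
      by (rule arg_cong)
    then show False
      using ij r2_pos[of j] by (simp add: axis_def)
  qed
  show "r2$j < r1$j"
  proof (rule ccontr)
    assume "\<not> r2$j < r1$j"
    then have "axis j (r2$j) \<in> record_region {r1, r2}"
      using unit_cube by (auto intro: axis_mem_record_region_pair)
    moreover have "vle (axis j (r2$j)) ?z"
      using r1_pos[of i] unfolding vle_def axis_def by auto
    ultimately have "axis j (r2$j) = ?z"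
      by (rule mem_generatorsD[OF z])
    then have "axis j (r2$j) $ i = ?z $ i"
      by (rule arg_cong)
    then show False
      using ij r1_pos[of i] by (simp add: axis_def)
  qed
qed

lemma generators_record_region_pair:
  "generators (record_region {r1, r2}) =
     range (\<lambda>i. axis i (max (r1$i) (r2$i))) \<union>
     (\<lambda>(i, j). axis i (r1$i) + axis j (r2$j)) ` ({i. r1$i < r2$i} \<times> {j. r2$j < r1$j})"
proof (intro equalityI subsetI)
  fix x assume x: "x \<in> generators (record_region {r1, r2})"
  then show "x \<in> range (\<lambda>i. axis i (max (r1$i) (r2$i))) \<union>
      (\<lambda>(i, j). axis i (r1$i) + axis j (r2$j)) ` ({i. r1$i < r2$i} \<times> {j. r2$j < r1$j})"
  proof (cases rule: generators_record_region_pair_cases)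
    case (2 i j)
    then have "r1$i < r2$i" "r2$j < r1$j"
      using axis_add_axis_mem_generators_imp_less x by simp_all
    with 2 show ?thesis by force
  qed simp
next
  fix x assume "x \<in> range (\<lambda>i. axis i (max (r1$i) (r2$i))) \<union>
      (\<lambda>(i, j). axis i (r1$i) + axis j (r2$j)) ` ({i. r1$i < r2$i} \<times> {j. r2$j < r1$j})"
  then show "x \<in> generators (record_region {r1, r2})"
    using axis_max_mem_generators axis_add_axis_mem_generators by force
qed

lemma card_generators_record_region_pair:
  assumes no_ties: "\<forall>j. r1$j \<noteq> r2$j"
  shows "card (generators (record_region {r1, r2})) =
     CARD('n) + card {i. r1$i < r2$i} * (CARD('n) - card {i. r1$i < r2$i})"
proof -
  let ?A = "{i. r1$i < r2$i}" and ?B = "{j. r2$j < r1$j}"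
  let ?f = "\<lambda>i. axis i (max (r1$i) (r2$i))"
    and ?g = "\<lambda>(i, j). axis i (r1$i) + axis j (r2$j)"
  have "inj ?f"
  proof (rule injI)
    fix i i' assume "?f i = ?f i'"
    then show "i = i'"
      using r1_pos[of i] r1_pos[of i'] by (auto simp: axis_eq_axis max_def split: if_splits)
  qed
  moreover have "inj_on ?g (?A \<times> ?B)"
  proof (rule inj_onI, clarsimp)
    fix i j i' j' assume A: "r1$i < r2$i" "r1$i' < r2$i'" and B: "r2$j < r1$j" "r2$j' < r1$j'"
      and eq: "axis i (r1$i) + axis j (r2$j) = axis i' (r1$i') + axis j' (r2$j')"
    have "i \<noteq> j" "i' \<noteq> j'" using A B by auto
    moreover have "(axis i (r1$i) + axis j (r2$j)) $ i = (axis i' (r1$i') + axis j' (r2$j')) $ i"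
      "(axis i (r1$i) + axis j (r2$j)) $ j = (axis i' (r1$i') + axis j' (r2$j')) $ j"
      using eq by simp_all
    ultimately show "i = i' \<and> j = j'"
      using r1_pos[of i] r2_pos[of j] no_ties by (auto simp: axis_def split: if_splits)
  qed
  moreover have "range ?f \<inter> ?g ` (?A \<times> ?B) = {}"
  proof (rule ccontr)
    assume "range ?f \<inter> ?g ` (?A \<times> ?B) \<noteq> {}"
    then obtain k i j where "i \<in> ?A" "j \<in> ?B" and eq: "?f k = axis i (r1$i) + axis j (r2$j)"
      by auto
    then have "i \<noteq> j" by auto
    moreover have "?f k $ i = (axis i (r1$i) + axis j (r2$j)) $ i"
      "?f k $ j = (axis i (r1$i) + axis j (r2$j)) $ j"
      using eq by simp_all
    ultimately show False
      using r1_pos[of i] r2_pos[of j] by (auto simp: axis_def split: if_splits)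
  qed
  moreover have "card ?B = CARD('n) - card ?A"
  proof -
    have "?B = UNIV - ?A" using no_ties by (auto simp: neq_iff)
    then show ?thesis by (simp add: card_Diff_subset)
  qed
  ultimately show ?thesis
    unfolding generators_record_region_pair
    by (simp add: card_Un_disjoint card_image card_cartesian_product)
qed

end

lemma add_half_eq_add_half:
  fixes x y a b :: real
  assumes eq: "x + a = y + b" and "0 < x" "x < 1/2" "0 < y" "y < 1/2"
    and ab: "a \<in> {0, 1/2}" "b \<in> {0, 1/2}"
  shows "x = y \<and> a = b"
proof -
  have "a = b"
  proof (rule ccontr)
    assume "a \<noteq> b"
    with ab have "a - b = 1/2 \<or> b - a = 1/2" by auto
    with assms(1-5) show False by linarith
  qed
  with eq show ?thesis by simp
qed

lemma ex_record_pair_with_less_set: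
  fixes A :: "'n::finite set"
  shows "\<exists>r1 r2 :: real^'n. (\<forall>j. 0 < r1$j \<and> r1$j < 1 \<and> 0 < r2$j \<and> r2$j < 1)
     \<and> (\<forall>i j. r1$i = r1$j \<longrightarrow> i = j) \<and> (\<forall>i j. r2$i = r2$j \<longrightarrow> i = j)
     \<and> (\<forall>i j. r1$i \<noteq> r2$j) \<and> {i. r1$i < r2$i} = A"
proof -
  define p :: "'n \<Rightarrow> real" where "p k = 1 / (real (to_nat k) + 3)" for k
  have p_bounds: "0 < p k" "p k < 1/2" for k
    unfolding p_def by (simp_all add: field_simps)
  have "inj p"
    by (rule injI) (simp add: p_def)
  define e1 :: "'n \<Rightarrow> real" where "e1 k = (if k \<in> A then 0 else 1/2)" for k
  define e2 :: "'n \<Rightarrow> real" where "e2 k = 1/2 - e1 k" for k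
  have e: "e1 k \<in> {0, 1/2}" "e2 k \<in> {0, 1/2}" "e1 k \<noteq> e2 k" for k
    by (simp_all add: e1_def e2_def)
  have shift_eq: "i = j \<and> a = b"
    if "p i + a = p j + b" "a \<in> {0, 1/2}" "b \<in> {0, 1/2}" for i j a b
    using add_half_eq_add_half[OF that(1) p_bounds p_bounds that(2,3)] \<open>inj p\<close>
    by (auto dest: injD)
  define r1 :: "real^'n" where "r1 = (\<chi> k. p k + e1 k)"
  define r2 :: "real^'n" where "r2 = (\<chi> k. p k + e2 k)"
  have "\<forall>j. 0 < r1$j \<and> r1$j < 1 \<and> 0 < r2$j \<and> r2$j < 1"
  proof
    fix k
    show "0 < r1$k \<and> r1$k < 1 \<and> 0 < r2$k \<and> r2$k < 1"
      using p_bounds[of k] e(1,2)[of k] unfolding r1_def r2_def by auto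
  qed
  moreover have "\<forall>i j. r1$i = r1$j \<longrightarrow> i = j"
    using shift_eq e(1) unfolding r1_def by simp
  moreover have "\<forall>i j. r2$i = r2$j \<longrightarrow> i = j"
    using shift_eq e(2) unfolding r2_def by simp
  moreover have "\<forall>i j. r1$i \<noteq> r2$j"
    using shift_eq e unfolding r1_def r2_def by (metis vec_lambda_beta)
  moreover have "{i. r1$i < r2$i} = A"
    unfolding r1_def r2_def e2_def e1_def by auto
  ultimately show ?thesis by blast
qed

lemma card_generators_incomparable_pair:
  fixes r1 r2 :: "real^'n::finite"
  assumes cube: "\<forall>j. 0 < r1$j \<and> r1$j < 1 \<and> 0 < r2$j \<and> r2$j < 1"
    and "incomparable r1 r2" and no_ties: "\<forall>i j. r1$i \<noteq> r2$j"
  obtains a where "1 \<le> a" "a < CARD('n)"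
    "card (generators (record_region {r1, r2})) = CARD('n) + a * (CARD('n) - a)"
proof -
  let ?A = "{i. r1$i < r2$i}"
  obtain i j where "r1$i < r2$i" "r2$j < r1$j"
    using \<open>incomparable r1 r2\<close> unfolding incomparable_iff_ex_less by blast
  then have "i \<in> ?A" "j \<notin> ?A"
    by simp_all
  then have "1 \<le> card ?A" "card ?A < CARD('n)"
    by (auto simp: Suc_le_eq card_gt_0_iff intro!: psubset_card_mono)
  with card_generators_record_region_pair[OF cube] no_ties show thesis
    using that by simp
qed

lemma ex_incomparable_pair_with_card_generators:
  assumes "1 \<le> a" "a < CARD('n::finite)"
  shows "\<exists>r1 r2 :: real^'n.
       CARD('n) + a * (CARD('n) - a) = card (generators (record_region {r1, r2}))
     \<and> (\<forall>j. 0 < r1$j \<and> r1$j < 1 \<and> 0 < r2$j \<and> r2$j < 1) \<and> incomparable r1 r2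
     \<and> (\<forall>i j. r1$i = r1$j \<longrightarrow> i = j) \<and> (\<forall>i j. r2$i = r2$j \<longrightarrow> i = j)
     \<and> (\<forall>i j. r1$i \<noteq> r2$j)"
proof -
  obtain A :: "'n set" where A: "card A = a"
    using assms(2) by (metis less_imp_le obtain_subset_with_card_n)
  obtain r1 r2 :: "real^'n" where r: "\<forall>j. 0 < r1$j \<and> r1$j < 1 \<and> 0 < r2$j \<and> r2$j < 1"
    "\<forall>i j. r1$i = r1$j \<longrightarrow> i = j" "\<forall>i j. r2$i = r2$j \<longrightarrow> i = j"
    "\<forall>i j. r1$i \<noteq> r2$j" and less_set: "{i. r1$i < r2$i} = A"
    using ex_record_pair_with_less_set[of A] by blast
  have "A \<noteq> {}" "A \<noteq> UNIV"
    using assms A by auto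
  then have "incomparable r1 r2"
    using r(4) less_set unfolding incomparable_iff_ex_less by (auto simp: neq_iff)
  moreover have "CARD('n) + a * (CARD('n) - a) = card (generators (record_region {r1, r2}))"
    using card_generators_record_region_pair[OF r(1)] r(4) less_set A by simp
  ultimately show ?thesis
    using r by (intro exI[of _ r1] exI[of _ r2]) blast
qed

lemma le_half_representative:
  fixes a d :: nat
  assumes "1 \<le> a" "a < d"
  obtains b where "1 \<le> b" "b \<le> d div 2" "d + a * (d - a) = d + b * (d - b)"
proof (cases "a \<le> d div 2")
  case True
  with assms that show ?thesis by blast
next
  case False
  have "d + a * (d - a) = d + (d - a) * (d - (d - a))"
    using assms by (simp add: mult.commute)
  with assms False show ?thesis
    by (intro that[of "d - a"]) auto
qed

theorem mainTheorem5:
  assumes "CARD('n::finite) \<ge> 2"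
  shows "{card (generators (record_region {r1, r2})) | r1 r2 :: real^'n.
            (\<forall>j. 0 < r1$j \<and> r1$j < 1 \<and> 0 < r2$j \<and> r2$j < 1)
          \<and> incomparable r1 r2
          \<and> (\<forall>i j. r1$i = r1$j \<longrightarrow> i = j)
          \<and> (\<forall>i j. r2$i = r2$j \<longrightarrow> i = j)
          \<and> (\<forall>i j. r1$i \<noteq> r2$j)}
       = {CARD('n) + a * (CARD('n) - a) | a. 1 \<le> a \<and> a \<le> CARD('n) div 2}"
  (is "?L = ?R")
proof (intro equalityI subsetI)
  fix c assume "c \<in> ?L"
  then obtain a where "1 \<le> a" "a < CARD('n)" "c = CARD('n) + a * (CARD('n) - a)"
    using card_generators_incomparable_pair by blast
  then obtain b where "1 \<le> b" "b \<le> CARD('n) div 2" "c = CARD('n) + b * (CARD('n) - b)"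
    by (metis le_half_representative)
  then show "c \<in> ?R" by blast
next
  fix c assume "c \<in> ?R"
  then obtain a where "1 \<le> a" "a \<le> CARD('n) div 2" "c = CARD('n) + a * (CARD('n) - a)"
    by blast
  moreover have "a < CARD('n)"
    using \<open>a \<le> CARD('n) div 2\<close> zero_less_card_finite[where 'a='n] by presburger
  ultimately show "c \<in> ?L"
    using ex_incomparable_pair_with_card_generators[of a] by auto
qed

end
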